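(* Let $G$ be a highly graceful graph. Then $G$ contains no subgraph isomorphic to any of the following graphs: (1) a cycle $C_n$ with $n \equiv 1$ or $2 \pmod 4$; (2) the union of two cycles $C_m$ and $C_n$ with $m, n \equiv 3 \pmod 4$ that have exactly one node in common; (3) the union of three cycles $C_l, C_m, C_n$ with $l \equiv 0 \pmod 4$ and $m, n \equiv 3 \pmod 4$, where $C_m$ and $C_n$ are node-disjoint and $C_l$ has exactly one node in common with each of $C_m$ and $C_n$.
   Context: Graphs are finite, undirected, without loops or multiple edges. A $(p,q)$-graph has $p$ nodes and $q$ edges. A graceful labeling of a $(p,q)$-graph $G$ is an injective map $\varphi: V(G) \to \{0,1,\dots,q\}$ such that the edge labels $|\varphi(u)-\varphi(v)|$, $uv \in E(G)$, are pairwise distinct (hence are exactly $1,\dots,q$); $G$ is graceful if it has a graceful labeling. A graph $G$ is highly graceful if every connected subgraph of $G$ (including $G$ itself) is graceful. *)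

theory Defs
  imports Main
begin

definition simple_graph :: "'a set \<Rightarrow> 'a set set \<Rightarrow> bool" where
  "simple_graph V E \<longleftrightarrow> finite V \<and>
     (\<forall>e\<in>E. \<exists>u v. e = {u, v} \<and> u \<noteq> v \<and> u \<in> V \<and> v \<in> V)"

definition subgraph :: "'a set \<Rightarrow> 'a set set \<Rightarrow> 'a set \<Rightarrow> 'a set set \<Rightarrow> bool" where
  "subgraph V' E' V E \<longleftrightarrow> V' \<subseteq> V \<and> E' \<subseteq> E \<and> (\<forall>e\<in>E'. e \<subseteq> V')"

definition connected_graph :: "'a set \<Rightarrow> 'a set set \<Rightarrow> bool" where
  "connected_graph V E \<longleftrightarrow> V \<noteq> {} \<and>
     (\<forall>u\<in>V. \<forall>v\<in>V. (u, v) \<in> {(x, y). {x, y} \<in> E}\<^sup>*)"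

definition graceful_labeling :: "'a set \<Rightarrow> 'a set set \<Rightarrow> ('a \<Rightarrow> nat) \<Rightarrow> bool" where
  "graceful_labeling V E \<phi> \<longleftrightarrow> inj_on \<phi> V \<and> (\<forall>v\<in>V. \<phi> v \<le> card E) \<and>
     (\<forall>u v x y. {u, v} \<in> E \<longrightarrow> {x, y} \<in> E \<longrightarrow>
        \<bar>int (\<phi> u) - int (\<phi> v)\<bar> = \<bar>int (\<phi> x) - int (\<phi> y)\<bar> \<longrightarrow> {u, v} = {x, y})"

definition graceful :: "'a set \<Rightarrow> 'a set set \<Rightarrow> bool" where
  "graceful V E \<longleftrightarrow> (\<exists>\<phi>. graceful_labeling V E \<phi>)"

definition highly_graceful :: "'a set \<Rightarrow> 'a set set \<Rightarrow> bool" where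
  "highly_graceful V E \<longleftrightarrow>
     (\<forall>V' E'. subgraph V' E' V E \<and> connected_graph V' E' \<longrightarrow> graceful V' E')"

text \<open>A cycle of length n = length xs in (V,E): distinct vertices x_0,...,x_{n-1}, n >= 3,
  with x_i x_{i+1 mod n} edges; i.e. a subgraph isomorphic to C_n.\<close>
definition is_cycle :: "'a set \<Rightarrow> 'a set set \<Rightarrow> 'a list \<Rightarrow> bool" where
  "is_cycle V E xs \<longleftrightarrow> length xs \<ge> 3 \<and> distinct xs \<and> set xs \<subseteq> V \<and>
     (\<forall>i < length xs. {xs ! i, xs ! ((i + 1) mod length xs)} \<in> E)"

end

theory Submission
  imports Defs
begin

text \<open>Rosa's parity argument: in a graceful labeling \<open>\<phi>\<close> of a graph with \<open>q\<close> edges the edge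
  labels are \<open>1, \<dots>, q\<close>, and \<open>|\<phi> u - \<phi> v| \<equiv> \<phi> u + \<phi> v (mod 2)\<close>, so
  \<open>q (q + 1) / 2 \<equiv> \<Sum>\<^sub>v deg v \<cdot> \<phi> v (mod 2)\<close>. If every vertex has even degree this forces
  \<open>q \<equiv> 0, 3 (mod 4)\<close>. Each forbidden configuration is a connected subgraph in which every
  vertex has even degree, and its number of edges (the sum of the cycle lengths, as the cycles
  share no edges) is \<open>\<equiv> 1, 2 (mod 4)\<close>; in a highly graceful graph this subgraph would
  have to be graceful.\<close>

lemma even_Sum_atLeast1_atMost_iff:
  fixes q :: nat
  shows "even (\<Sum>{1..q}) \<longleftrightarrow> q mod 4 = 0 \<or> q mod 4 = 3"
proof -
  have "\<Sum>{1..q} = q * (q + 1) div 2"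
    by (simp add: Sum_Icc_nat)
  moreover obtain k r where "q = 4 * k + r" "r < 4"
    by (metis div_mod_decomp mod_less_divisor zero_less_numeral mult.commute)
  moreover have "r = 0 \<or> r = 1 \<or> r = 2 \<or> r = 3"
    using \<open>r < 4\<close> by auto
  ultimately show ?thesis
    by (auto simp: algebra_simps)
qed

definition edge_label :: "('a \<Rightarrow> nat) \<Rightarrow> 'a set \<Rightarrow> nat" where
  "edge_label \<phi> e = Max (\<phi> ` e) - Min (\<phi> ` e)"

lemma edge_label_doubleton: "edge_label \<phi> {u, v} = nat \<bar>int (\<phi> u) - int (\<phi> v)\<bar>"
  by (simp add: edge_label_def)

lemma sum_doubleton_edge_label:
  assumes "u \<noteq> v"
  shows "sum \<phi> {u, v} = edge_label \<phi> {u, v} + 2 * Min (\<phi> ` {u, v})"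
  using assms by (simp add: edge_label_def max_def min_def)

lemma bij_betw_edge_label:
  assumes "simple_graph V E" and "graceful_labeling V E \<phi>"
  shows "bij_betw (edge_label \<phi>) E {1..card E}"
proof -
  have edge: "\<exists>u v. e = {u, v} \<and> u \<noteq> v \<and> u \<in> V \<and> v \<in> V" if "e \<in> E" for e
    using assms(1) that unfolding simple_graph_def by blast
  have inj: "inj_on (edge_label \<phi>) E"
  proof (rule inj_onI)
    fix e e' assume "e \<in> E" "e' \<in> E" and same_label: "edge_label \<phi> e = edge_label \<phi> e'"
    obtain u v x y where "e = {u, v}" "e' = {x, y}"
      using edge \<open>e \<in> E\<close> \<open>e' \<in> E\<close> by meson
    moreover have "\<bar>int (\<phi> u) - int (\<phi> v)\<bar> = \<bar>int (\<phi> x) - int (\<phi> y)\<bar>"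
      using same_label unfolding \<open>e = {u, v}\<close> \<open>e' = {x, y}\<close> edge_label_doubleton by simp
    ultimately show "e = e'"
      using assms(2) \<open>e \<in> E\<close> \<open>e' \<in> E\<close> unfolding graceful_labeling_def by blast
  qed
  have "edge_label \<phi> e \<in> {1..card E}" if "e \<in> E" for e
  proof -
    obtain u v where "e = {u, v}" "u \<noteq> v" "u \<in> V" "v \<in> V"
      using edge \<open>e \<in> E\<close> by meson
    moreover from this have "\<phi> u \<noteq> \<phi> v" "\<phi> u \<le> card E" "\<phi> v \<le> card E"
      using assms(2) unfolding graceful_labeling_def inj_on_def by auto
    ultimately show ?thesis
      by (auto simp: edge_label_doubleton)
  qed
  then have "edge_label \<phi> ` E = {1..card E}"
    using inj by (intro card_subset_eq) (auto simp: card_image)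
  with inj show ?thesis
    by (simp add: bij_betw_def)
qed

text \<open>The last conjunct says that every vertex has even degree (take \<open>\<phi>\<close> to be the
  indicator function of a vertex); a connected graph with this property is Eulerian.\<close>
definition eulerian :: "'a set \<Rightarrow> 'a set set \<Rightarrow> bool" where
  "eulerian V E \<longleftrightarrow> simple_graph V E \<and> connected_graph V E \<and>
     (\<forall>\<phi> :: 'a \<Rightarrow> nat. even (\<Sum>e\<in>E. sum \<phi> e))"

theorem eulerian_graceful_card_mod_4:
  assumes "eulerian V E" and "graceful V E"
  shows "card E mod 4 = 0 \<or> card E mod 4 = 3"
proof -
  obtain \<phi> where \<phi>: "graceful_labeling V E \<phi>"
    using assms(2) unfolding graceful_def by blast
  have simple: "simple_graph V E" and even_sums: "even (\<Sum>e\<in>E. sum \<phi> e)"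
    using assms(1) unfolding eulerian_def by blast+
  have "sum \<phi> e = edge_label \<phi> e + 2 * Min (\<phi> ` e)" if "e \<in> E" for e
    using simple that sum_doubleton_edge_label unfolding simple_graph_def by fastforce
  then have "(\<Sum>e\<in>E. sum \<phi> e) = (\<Sum>e\<in>E. edge_label \<phi> e) + 2 * (\<Sum>e\<in>E. Min (\<phi> ` e))"
    by (simp add: sum.distrib sum_distrib_left)
  also have "(\<Sum>e\<in>E. edge_label \<phi> e) = \<Sum>{1..card E}"
    using sum.reindex_bij_betw[OF bij_betw_edge_label[OF simple \<phi>], of id] by simp
  finally have "even (\<Sum>{1..card E})"
    using even_sums by simp
  then show ?thesis
    using even_Sum_atLeast1_atMost_iff by blast
qed

lemma finite_edges_simple_graph:
  assumes "simple_graph V E"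
  shows "finite E"
proof (rule finite_subset)
  show "E \<subseteq> Pow V"
    using assms unfolding simple_graph_def by force
  show "finite (Pow V)"
    using assms unfolding simple_graph_def by simp
qed

lemma simple_graph_Un:
  "simple_graph V1 E1 \<Longrightarrow> simple_graph V2 E2 \<Longrightarrow> simple_graph (V1 \<union> V2) (E1 \<union> E2)"
  unfolding simple_graph_def by (metis UnCI UnE finite_UnI)

lemma subgraph_Un:
  "subgraph V1 E1 V E \<Longrightarrow> subgraph V2 E2 V E \<Longrightarrow> subgraph (V1 \<union> V2) (E1 \<union> E2) V E"
  unfolding subgraph_def by blast

lemma connected_graph_Un:
  assumes "connected_graph V1 E1" "connected_graph V2 E2" "V1 \<inter> V2 \<noteq> {}"
  shows "connected_graph (V1 \<union> V2) (E1 \<union> E2)"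
proof -
  let ?R = "\<lambda>E. {(x, y). {x, y} \<in> E}"
  have "(?R E1)\<^sup>* \<subseteq> (?R (E1 \<union> E2))\<^sup>*" "(?R E2)\<^sup>* \<subseteq> (?R (E1 \<union> E2))\<^sup>*"
    by (auto intro!: rtrancl_mono)
  then have reach: "(u, v) \<in> (?R (E1 \<union> E2))\<^sup>*" if "u \<in> Vi" "v \<in> Vi" "Vi = V1 \<or> Vi = V2" for u v Vi
    using assms(1,2) that unfolding connected_graph_def by blast
  obtain w where "w \<in> V1" "w \<in> V2"
    using assms(3) by blast
  show ?thesis
    unfolding connected_graph_def
  proof (intro conjI ballI)
    fix u v assume "u \<in> V1 \<union> V2" "v \<in> V1 \<union> V2"
    then have "(u, w) \<in> (?R (E1 \<union> E2))\<^sup>*" "(w, v) \<in> (?R (E1 \<union> E2))\<^sup>*"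
      using reach \<open>w \<in> V1\<close> \<open>w \<in> V2\<close> by blast+
    then show "(u, v) \<in> (?R (E1 \<union> E2))\<^sup>*"
      by (rule rtrancl_trans)
  qed (use \<open>w \<in> V1\<close> in blast)
qed

lemma eulerian_Un:
  assumes "eulerian V1 E1" "eulerian V2 E2" "V1 \<inter> V2 \<noteq> {}" "E1 \<inter> E2 = {}"
  shows "eulerian (V1 \<union> V2) (E1 \<union> E2)"
  unfolding eulerian_def
proof (intro conjI allI)
  show "simple_graph (V1 \<union> V2) (E1 \<union> E2)" "connected_graph (V1 \<union> V2) (E1 \<union> E2)"
    using assms simple_graph_Un connected_graph_Un unfolding eulerian_def by blast+
  fix \<phi> :: "'a \<Rightarrow> nat"
  have "finite E1" "finite E2"
    using assms(1,2) finite_edges_simple_graph unfolding eulerian_def by blast+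
  then have "(\<Sum>e\<in>E1 \<union> E2. sum \<phi> e) = (\<Sum>e\<in>E1. sum \<phi> e) + (\<Sum>e\<in>E2. sum \<phi> e)"
    using assms(4) by (rule sum.union_disjoint)
  then show "even (\<Sum>e\<in>E1 \<union> E2. sum \<phi> e)"
    using assms(1,2) unfolding eulerian_def by simp
qed

lemma simple_graph_edge:
  assumes "simple_graph V E" "e \<in> E"
  shows "e \<subseteq> V" "card e = 2"
  using assms unfolding simple_graph_def by auto

lemma simple_graphs_edges_disjoint:
  assumes "simple_graph V1 E1" "simple_graph V2 E2" "card (V1 \<inter> V2) \<le> 1"
  shows "E1 \<inter> E2 = {}"
proof (rule ccontr)
  assume "E1 \<inter> E2 \<noteq> {}"
  then obtain e where "e \<in> E1" "e \<in> E2"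
    by blast
  then have "e \<subseteq> V1 \<inter> V2" "card e = 2"
    using simple_graph_edge assms(1,2) by blast+
  moreover have "finite (V1 \<inter> V2)"
    using assms(1) unfolding simple_graph_def by blast
  ultimately have "2 \<le> card (V1 \<inter> V2)"
    by (metis card_mono)
  with assms(3) show False
    by simp
qed

lemma eulerian_Un_one_common_vertex:
  assumes "eulerian V1 E1" "eulerian V2 E2" "card (V1 \<inter> V2) = 1"
  shows "eulerian (V1 \<union> V2) (E1 \<union> E2)" "card (E1 \<union> E2) = card E1 + card E2"
proof -
  have "simple_graph V1 E1" "simple_graph V2 E2"
    using assms(1,2) unfolding eulerian_def by blast+
  then have "E1 \<inter> E2 = {}" "finite E1" "finite E2"
    using assms(3) by (simp_all add: simple_graphs_edges_disjoint finite_edges_simple_graph)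
  moreover have "V1 \<inter> V2 \<noteq> {}"
    using assms(3) by force
  ultimately show "eulerian (V1 \<union> V2) (E1 \<union> E2)" "card (E1 \<union> E2) = card E1 + card E2"
    using assms(1,2) eulerian_Un card_Un_disjoint by blast+
qed

lemma highly_graceful_eulerian_subgraph:
  assumes "highly_graceful V E" "subgraph V' E' V E" "eulerian V' E'"
  shows "card E' mod 4 = 0 \<or> card E' mod 4 = 3"
proof -
  have "graceful V' E'"
    using assms unfolding highly_graceful_def eulerian_def by blast
  with assms(3) show ?thesis
    by (rule eulerian_graceful_card_mod_4)
qed

lemma sum_lessThan_mod_shift:
  fixes f :: "nat \<Rightarrow> 'b::comm_monoid_add"
  shows "(\<Sum>i<n. f ((i + 1) mod n)) = (\<Sum>i<n. f i)"
proof (cases n)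
  case (Suc m)
  have "(\<Sum>i<Suc m. f ((i + 1) mod Suc m)) = (\<Sum>i<m. f (Suc i)) + f 0"
    by (simp add: sum.lessThan_Suc)
  also have "\<dots> = (\<Sum>i<Suc m. f i)"
    unfolding sum.lessThan_Suc_shift by (simp add: add.commute)
  finally show ?thesis
    using Suc by simp
qed simp

definition cycle_edges :: "'a list \<Rightarrow> 'a set set" where
  "cycle_edges xs = (\<lambda>i. {xs ! i, xs ! ((i + 1) mod length xs)}) ` {..<length xs}"

lemma cycle_edge_neq:
  assumes "distinct xs" "2 \<le> length xs" "i < length xs"
  shows "xs ! i \<noteq> xs ! ((i + 1) mod length xs)"
proof -
  have "(i + 1) mod length xs \<noteq> i" "(i + 1) mod length xs < length xs"
    using assms(2,3) by (auto simp: mod_Suc)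
  then show ?thesis
    using assms(1,3) by (simp add: nth_eq_iff_index_eq)
qed

lemma inj_on_cycle_edge:
  assumes "distinct xs" "3 \<le> length xs"
  shows "inj_on (\<lambda>i. {xs ! i, xs ! ((i + 1) mod length xs)}) {..<length xs}"
proof (rule inj_onI)
  let ?n = "length xs"
  fix i j
  assume "i \<in> {..<?n}" "j \<in> {..<?n}"
    and same: "{xs ! i, xs ! ((i + 1) mod ?n)} = {xs ! j, xs ! ((j + 1) mod ?n)}"
  then have "i < ?n" "j < ?n" "(i + 1) mod ?n < ?n" "(j + 1) mod ?n < ?n"
    using assms(2) by (auto intro: mod_less_divisor)
  with assms(1) same have "i = j \<or> (i = (j + 1) mod ?n \<and> j = (i + 1) mod ?n)"
    by (auto simp: doubleton_eq_iff nth_eq_iff_index_eq)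
  then show "i = j"
    using \<open>i < ?n\<close> \<open>j < ?n\<close> assms(2) by (auto simp: mod_Suc split: if_splits)
qed

lemma card_cycle_edges:
  assumes "distinct xs" "3 \<le> length xs"
  shows "card (cycle_edges xs) = length xs"
  unfolding cycle_edges_def using card_image[OF inj_on_cycle_edge[OF assms]] by simp

lemma even_sum_cycle_edges:
  fixes \<phi> :: "'a \<Rightarrow> nat"
  assumes "distinct xs" "3 \<le> length xs"
  shows "even (\<Sum>e\<in>cycle_edges xs. sum \<phi> e)"
proof -
  let ?n = "length xs"
  have "(\<Sum>e\<in>cycle_edges xs. sum \<phi> e) = (\<Sum>i<?n. sum \<phi> {xs ! i, xs ! ((i + 1) mod ?n)})"
    unfolding cycle_edges_def using sum.reindex[OF inj_on_cycle_edge[OF assms], of "sum \<phi>"]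
    by (simp add: comp_def)
  also have "\<dots> = (\<Sum>i<?n. \<phi> (xs ! i)) + (\<Sum>i<?n. \<phi> (xs ! ((i + 1) mod ?n)))"
    using cycle_edge_neq[OF assms(1)] assms(2) by (simp add: sum.distrib)
  also have "\<dots> = 2 * (\<Sum>i<?n. \<phi> (xs ! i))"
    using sum_lessThan_mod_shift[of "\<lambda>i. \<phi> (xs ! i)" ?n] by simp
  finally show ?thesis
    by simp
qed

lemma simple_graph_cycle_edges:
  assumes "distinct xs" "2 \<le> length xs"
  shows "simple_graph (set xs) (cycle_edges xs)"
  unfolding simple_graph_def cycle_edges_def
proof (intro conjI ballI)
  fix e assume "e \<in> (\<lambda>i. {xs ! i, xs ! ((i + 1) mod length xs)}) ` {..<length xs}"
  then obtain i where "i < length xs" "e = {xs ! i, xs ! ((i + 1) mod length xs)}"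
    by blast
  moreover have "(i + 1) mod length xs < length xs"
    using assms(2) by (intro mod_less_divisor) linarith
  ultimately show "\<exists>u v. e = {u, v} \<and> u \<noteq> v \<and> u \<in> set xs \<and> v \<in> set xs"
    using cycle_edge_neq[OF assms] nth_mem by blast
qed simp

lemma connected_graph_cycle_edges:
  assumes "xs \<noteq> []"
  shows "connected_graph (set xs) (cycle_edges xs)"
proof -
  let ?R = "{(x, y). {x, y} \<in> cycle_edges xs}"
  have "sym (?R\<^sup>*)"
    by (intro sym_rtrancl) (auto simp: sym_def insert_commute)
  have reach: "(xs ! 0, xs ! i) \<in> ?R\<^sup>*" if "i < length xs" for i
    using that
  proof (induction i)
    case (Suc i)
    then have "(xs ! i, xs ! Suc i) \<in> ?R"
      unfolding cycle_edges_def by force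
    moreover have "(xs ! 0, xs ! i) \<in> ?R\<^sup>*"
      using Suc by simp
    ultimately show ?case
      by (simp add: rtrancl_into_rtrancl)
  qed simp
  show ?thesis
    unfolding connected_graph_def
  proof (intro conjI ballI)
    fix u v assume "u \<in> set xs" "v \<in> set xs"
    then obtain i j where "i < length xs" "u = xs ! i" "j < length xs" "v = xs ! j"
      by (auto simp: in_set_conv_nth)
    then have "(u, xs ! 0) \<in> ?R\<^sup>*" "(xs ! 0, v) \<in> ?R\<^sup>*"
      using reach \<open>sym (?R\<^sup>*)\<close> by (auto dest: symD)
    then show "(u, v) \<in> ?R\<^sup>*"
      by (rule rtrancl_trans)
  qed (use assms in simp)
qed

lemma eulerian_cycle_edges:
  assumes "distinct xs" "3 \<le> length xs"
  shows "eulerian (set xs) (cycle_edges xs)"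
proof -
  have "xs \<noteq> []" "2 \<le> length xs"
    using assms(2) by auto
  then show ?thesis
    using assms simple_graph_cycle_edges connected_graph_cycle_edges even_sum_cycle_edges
    unfolding eulerian_def by blast
qed

lemma
  assumes "is_cycle V E xs"
  shows is_cycle_subgraph: "subgraph (set xs) (cycle_edges xs) V E"
    and is_cycle_eulerian: "eulerian (set xs) (cycle_edges xs)"
    and is_cycle_card_cycle_edges: "card (cycle_edges xs) = length xs"
proof -
  have "distinct xs" "3 \<le> length xs"
    using assms unfolding is_cycle_def by blast+
  then show "eulerian (set xs) (cycle_edges xs)" "card (cycle_edges xs) = length xs"
    by (simp_all add: eulerian_cycle_edges card_cycle_edges)
  then have "simple_graph (set xs) (cycle_edges xs)"
    unfolding eulerian_def by blast
  then show "subgraph (set xs) (cycle_edges xs) V E"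
    using assms simple_graph_edge(1) unfolding is_cycle_def subgraph_def cycle_edges_def by blast
qed

lemma highly_graceful_cycle_length_mod_4:
  assumes "highly_graceful V E" "is_cycle V E c"
  shows "length c mod 4 = 0 \<or> length c mod 4 = 3"
  using highly_graceful_eulerian_subgraph[OF assms(1) is_cycle_subgraph is_cycle_eulerian] assms(2)
  by (simp add: is_cycle_card_cycle_edges)

lemma highly_graceful_two_cycles_length_mod_4:
  assumes hg: "highly_graceful V E" and c: "is_cycle V E c" and d: "is_cycle V E d"
    and "card (set c \<inter> set d) = 1"
  shows "(length c + length d) mod 4 = 0 \<or> (length c + length d) mod 4 = 3"
proof -
  note cd = eulerian_Un_one_common_vertex[OF is_cycle_eulerian[OF c] is_cycle_eulerian[OF d] assms(4)]
  have "subgraph (set c \<union> set d) (cycle_edges c \<union> cycle_edges d) V E"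
    using c d by (intro subgraph_Un is_cycle_subgraph)
  from highly_graceful_eulerian_subgraph[OF hg this cd(1)] show ?thesis
    using c d by (simp add: cd(2) is_cycle_card_cycle_edges)
qed

lemma highly_graceful_three_cycles_length_mod_4:
  assumes hg: "highly_graceful V E"
    and b: "is_cycle V E b" and c: "is_cycle V E c" and d: "is_cycle V E d"
    and "set c \<inter> set d = {}" "card (set b \<inter> set c) = 1" "card (set b \<inter> set d) = 1"
  shows "(length b + length c + length d) mod 4 = 0 \<or> (length b + length c + length d) mod 4 = 3"
proof -
  note bc = eulerian_Un_one_common_vertex[OF is_cycle_eulerian[OF b] is_cycle_eulerian[OF c] assms(6)]
  have "(set b \<union> set c) \<inter> set d = set b \<inter> set d"
    using assms(5) by blast
  note bcd = eulerian_Un_one_common_vertex[OF bc(1) is_cycle_eulerian[OF d], unfolded this, OF assms(7)]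
  have "subgraph (set b \<union> set c \<union> set d) (cycle_edges b \<union> cycle_edges c \<union> cycle_edges d) V E"
    using b c d by (intro subgraph_Un is_cycle_subgraph)
  from highly_graceful_eulerian_subgraph[OF hg this bcd(1)] show ?thesis
    using b c d by (simp add: bcd(2) bc(2) is_cycle_card_cycle_edges)
qed

theorem proposition3p1:
  fixes V :: "'a set" and E :: "'a set set"
  assumes "simple_graph V E"
    and "highly_graceful V E"
  shows "\<not> (\<exists>c. is_cycle V E c \<and> (length c mod 4 = 1 \<or> length c mod 4 = 2)) \<and>
         \<not> (\<exists>c d. is_cycle V E c \<and> is_cycle V E d \<and>
              length c mod 4 = 3 \<and> length d mod 4 = 3 \<and>
              card (set c \<inter> set d) = 1) \<and>
         \<not> (\<exists>b c d. is_cycle V E b \<and> is_cycle V E c \<and> is_cycle V E d \<and>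
              length b mod 4 = 0 \<and> length c mod 4 = 3 \<and> length d mod 4 = 3 \<and>
              set c \<inter> set d = {} \<and>
              card (set b \<inter> set c) = 1 \<and> card (set b \<inter> set d) = 1)"
proof (intro conjI notI; elim exE conjE)
  fix c
  assume "is_cycle V E c" "length c mod 4 = 1 \<or> length c mod 4 = 2"
  with highly_graceful_cycle_length_mod_4[OF assms(2)] show False
    by fastforce
next
  fix c d
  assume "is_cycle V E c" "is_cycle V E d" "card (set c \<inter> set d) = 1"
    and "length c mod 4 = 3" "length d mod 4 = 3"
  from highly_graceful_two_cycles_length_mod_4[OF assms(2) this(1-3)] this(4,5) show False
    by presburger
next
  fix b c d
  assume "is_cycle V E b" "is_cycle V E c" "is_cycle V E d" "set c \<inter> set d = {}"
    "card (set b \<inter> set c) = 1" "card (set b \<inter> set d) = 1"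
    and "length b mod 4 = 0" "length c mod 4 = 3" "length d mod 4 = 3"
  from highly_graceful_three_cycles_length_mod_4[OF assms(2) this(1-6)] this(7-9) show False
    by presburger
qed

end
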